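(* Let $n \in \mathbb{N}$ and $m \in \mathbb{Z}$ with $0 \le m \le n-1$. Then there exists a constant $C_{n,m} > 0$ with the following property: for every $k \in \mathbb{N}$ and every function $F \colon \mathcal{K}_k^n \to \mathbb{Z}^{n-1}$ such that $\|F(K_1) - F(K_2)\|_\infty \le 1$ for all $K_1, K_2 \in \mathcal{K}_k^n$ with $\dim(K_1 \cap K_2) \ge m$, there exist a $1$-connected subset $P \subset \mathbb{Z}^{n-1}$ with $|P| \le C_{n,m}$ and a subfamily $\mathcal{S} \subset F^{-1}[P]$ such that $\bigcup \mathcal{S}$ connects some opposite faces of $I^n$.
   Context: $I^n = [0,1]^n$. For $n,k \in \mathbb{N}$, $\mathcal{K}_k^n = \{\prod_{s=1}^n [\frac{i_s-1}{k}, \frac{i_s}{k}] : i_s \in \{1,\dots,k\}\}$ is the division of $I^n$ into $k^n$ closed cubes. $\dim$ denotes topological dimension (so for two cubes of $\mathcal{K}_k^n$, $\dim(K_1\cap K_2)\ge 0$ means $K_1 \cap K_2 \neq \emptyset$, and $\dim(K_1 \cap K_2)$ is the dimension of their common face). For $i \in \{1,\dots,n\}$ the $i$th opposite faces of $I^n$ are $I^n_{i,-} = \{z \in I^n : z_i = 0\}$ and $I^n_{i,+} = \{z \in I^n : z_i = 1\}$. A set $S \subset I^n$ connects the $i$th opposite faces of $I^n$ if $S$ is connected and $S \cap I^n_{i,-} \ne \emptyset \ne S \cap I^n_{i,+}$; it connects some opposite faces if this holds for some $i$. $\mathbb{Z}^0 = \{0\}$, and $\mathbb{Z}^{n-1}$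 carries the $\ell^\infty$ norm. For $r>0$, a set $P$ in a metric space is $r$-connected if any two of its points $x,y$ can be joined by a finite sequence $x=p_1,\dots,p_N=y$ of points of $P$ with consecutive distances at most $r$. For $P \subset \mathbb{Z}^{n-1}$, $F^{-1}[P]$ denotes the preimage, a subfamily of $\mathcal{K}_k^n$. *)

theory Defs
  imports "HOL-Analysis.Analysis"
begin

definition unit_cube :: "(real^'n) set" where
  "unit_cube = {x. \<forall>s. 0 \<le> x$s \<and> x$s \<le> 1}"

definition grid_cube :: "nat \<Rightarrow> ('n \<Rightarrow> nat) \<Rightarrow> (real^'n) set" where
  "grid_cube k i = {x. \<forall>s. (real (i s) - 1) / real k \<le> x$s \<and> x$s \<le> real (i s) / real k}"

definition grid_cubes :: "nat \<Rightarrow> (real^'n) set set" where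
  "grid_cubes k = {grid_cube k i | i. \<forall>s. 1 \<le> i s \<and> i s \<le> k}"

definition face_minus :: "'n \<Rightarrow> (real^'n) set" where
  "face_minus i = {z \<in> unit_cube. z$i = 0}"
definition face_plus :: "'n \<Rightarrow> (real^'n) set" where
  "face_plus i = {z \<in> unit_cube. z$i = 1}"

definition connects_opposite_faces :: "(real^'n) set \<Rightarrow> bool" where
  "connects_opposite_faces S \<longleftrightarrow>
     (\<exists>i. connected S \<and> S \<inter> face_minus i \<noteq> {} \<and> S \<inter> face_plus i \<noteq> {})"

text \<open>Z^d represented as integer sequences vanishing from index d on.\<close>
definition Zvec :: "nat \<Rightarrow> (nat \<Rightarrow> int) set" where
  "Zvec d = {a. \<forall>j\<ge>d. a j = 0}"

text \<open>l-infinity distance on Z^d (Z^0 = {0} has distance 0).\<close>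
definition linf_dist :: "nat \<Rightarrow> (nat \<Rightarrow> int) \<Rightarrow> (nat \<Rightarrow> int) \<Rightarrow> int" where
  "linf_dist d a b = Max ({\<bar>a j - b j\<bar> | j. j < d} \<union> {0})"

definition r_connected :: "('a \<Rightarrow> 'a \<Rightarrow> 'b::linorder) \<Rightarrow> 'b \<Rightarrow> 'a set \<Rightarrow> bool" where
  "r_connected dist_fn r P \<longleftrightarrow>
     (\<forall>x\<in>P. \<forall>y\<in>P. \<exists>ps. ps \<noteq> [] \<and> hd ps = x \<and> last ps = y \<and> set ps \<subseteq> P \<and>
        (\<forall>j. Suc j < length ps \<longrightarrow> dist_fn (ps ! j) (ps ! Suc j) \<le> r))"

end

theory Submission
  imports Defs
begin

text \<open>Put $M = n(2n+1)$ and number the directions $c$ as $p_c < n$. Colour $p$ cuts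
  \<open>\<int>\<close> into blocks of length $M$ separated by walls at $p(2n+1) + M\mathbb{Z}$; walls of
  different colours are at least $2n+1$ apart, so each of the $n - 1$ coordinates of $F(K)$
  comes within distance $n$ of the walls of at most one colour, and $K$ can be given a colour
  $c$ whose walls all its coordinates avoid. By the $n$-dimensional Hex theorem, a consequence
  of the Poincar\'e--Miranda theorem, there is a chain of touching cubes of one colour $c$ from
  $I^n_{c,-}$ to $I^n_{c,+}$. Touching cubes are linked by at most $n$ steps across facets, so
  their values differ by at most $n$ in each coordinate and no coordinate crosses a wall of
  colour $c$ along the chain: all values lie in one box of side $M$, which is $1$-connected
  and has at most $M^{n-1}$ points.\<close>

lemma unit_cube_eq_cbox: "(unit_cube :: (real^'n) set) = cbox 0 1"
  by (auto simp: unit_cube_def mem_box_cart)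

lemma grid_cube_eq_cbox:
  "(grid_cube k i :: (real^'n) set) = cbox (\<chi> s. (real (i s) - 1) / real k) (\<chi> s. real (i s) / real k)"
  by (auto simp: grid_cube_def mem_box_cart)

lemma closed_grid_cube: "closed (grid_cube k i :: (real^'n) set)"
  by (simp add: grid_cube_eq_cbox closed_cbox)

lemma connected_grid_cube: "connected (grid_cube k i :: (real^'n) set)"
  by (simp add: grid_cube_eq_cbox convex_connected)

lemma closed_face_minus: "closed (face_minus c :: (real^'n) set)"
proof -
  have "face_minus c = cbox 0 1 \<inter> {x::real^'n. x$c = 0}"
    by (auto simp: face_minus_def unit_cube_eq_cbox)
  moreover have "closed {x::real^'n. x$c = 0}"
    by (intro closed_Collect_eq continuous_intros continuous_on_component continuous_on_id)
  ultimately show ?thesis by (simp add: closed_Int closed_cbox)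
qed

lemma closed_face_plus: "closed (face_plus c :: (real^'n) set)"
proof -
  have "face_plus c = cbox 0 1 \<inter> {x::real^'n. x$c = 1}"
    by (auto simp: face_plus_def unit_cube_eq_cbox)
  moreover have "closed {x::real^'n. x$c = 1}"
    by (intro closed_Collect_eq continuous_intros continuous_on_component continuous_on_id)
  ultimately show ?thesis by (simp add: closed_Int closed_cbox)
qed

lemma face_minus_nonempty: "face_minus c \<noteq> ({} :: (real^'n) set)"
proof -
  have "(0::real^'n) \<in> face_minus c" by (auto simp: face_minus_def unit_cube_def)
  then show ?thesis by auto
qed

lemma face_plus_nonempty: "face_plus c \<noteq> ({} :: (real^'n) set)"
proof -
  have "(1::real^'n) \<in> face_plus c" by (auto simp: face_plus_def unit_cube_def)
  then show ?thesis by auto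
qed

text \<open>Poincar\'e--Miranda, via a fixed point of the clamped map \<open>x - f x\<close>.\<close>
lemma poincare_miranda_unit_cube:
  fixes f :: "real^'n \<Rightarrow> real^'n"
  assumes cont: "continuous_on unit_cube f"
    and lo: "\<And>x s. x \<in> unit_cube \<Longrightarrow> x$s = 0 \<Longrightarrow> f x $ s \<le> 0"
    and hi: "\<And>x s. x \<in> unit_cube \<Longrightarrow> x$s = 1 \<Longrightarrow> f x $ s \<ge> 0"
  shows "\<exists>x\<in>unit_cube. f x = 0"
proof -
  define g where "g x = (\<chi> s. max 0 (min 1 (x$s - f x $ s)))" for x :: "real^'n"
  have "continuous_on unit_cube g"
    unfolding g_def
    by (intro continuous_on_vec_lambda continuous_intros continuous_on_component cont continuous_on_id)
  moreover have "g \<in> unit_cube \<rightarrow> unit_cube"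
    by (auto simp: g_def unit_cube_def)
  moreover have "cbox (0::real^'n) 1 \<noteq> {}"
    using mem_box_cart(2)[of 0 0 1] by auto
  ultimately obtain x where x: "x \<in> unit_cube" "g x = x"
    using brouwer[OF compact_cbox convex_box(1)] unfolding unit_cube_eq_cbox by blast
  have "f x $ s = 0" for s
  proof -
    have fixed: "max 0 (min 1 (x$s - f x $ s)) = x$s"
      using x(2) by (metis g_def vec_lambda_beta)
    have "0 \<le> x$s" "x$s \<le> 1" using x(1) by (auto simp: unit_cube_def)
    then consider (zero) "x$s = 0" | (one) "x$s = 1" | (inner) "0 < x$s" "x$s < 1" by linarith
    then show ?thesis
    proof cases
      case zero then show ?thesis using lo[OF x(1) zero] fixed by linarith
    next
      case one then show ?thesis using hi[OF x(1) one] fixed by linarith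
    next
      case inner then show ?thesis using fixed by linarith
    qed
  qed
  then show ?thesis using x(1) by (metis vec_eq_iff zero_index)
qed

lemma infdist_eq_imp_mem_both:
  assumes "closed A" "A \<noteq> {}" "closed B" "B \<noteq> {}"
    and "x \<in> A \<union> B" "infdist x A = infdist x B"
  shows "x \<in> A \<inter> B"
proof -
  have "x \<in> A \<longleftrightarrow> x \<in> B"
    using assms(1-4,6) by (simp add: in_closed_iff_infdist_zero)
  then show ?thesis using assms(5) by blast
qed

lemma closed_cover_of_unit_cube_meets:
  fixes A B :: "'n \<Rightarrow> (real^'n) set"
  assumes "\<And>c. closed (A c)" "\<And>c. closed (B c)"
    and "\<And>c. face_minus c \<subseteq> A c" "\<And>c. face_plus c \<subseteq> B c"
    and cover: "unit_cube \<subseteq> (\<Union>c. A c \<union> B c)"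
  shows "\<exists>c. A c \<inter> B c \<noteq> {}"
proof -
  define f where "f x = (\<chi> c. infdist x (A c) - infdist x (B c))" for x :: "real^'n"
  have "continuous_on unit_cube f"
    unfolding f_def by (intro continuous_on_vec_lambda continuous_intros continuous_on_id)
  moreover have "f x $ c \<le> 0" if "x \<in> unit_cube" "x$c = 0" for x c
  proof -
    have "x \<in> A c" using that assms(3) by (auto simp: face_minus_def)
    then show ?thesis by (simp add: f_def infdist_nonneg)
  qed
  moreover have "f x $ c \<ge> 0" if "x \<in> unit_cube" "x$c = 1" for x c
  proof -
    have "x \<in> B c" using that assms(4) by (auto simp: face_plus_def)
    then show ?thesis by (simp add: f_def infdist_nonneg)
  qed
  ultimately obtain x where x: "x \<in> unit_cube" "f x = 0"
    using poincare_miranda_unit_cube by blast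
  then obtain c where "x \<in> A c \<union> B c" using cover by blast
  moreover have "infdist x (A c) = infdist x (B c)"
    using arg_cong[OF x(2), of "\<lambda>v. v $ c"] by (simp add: f_def)
  moreover have "A c \<noteq> {}" "B c \<noteq> {}"
    using assms(3,4) face_minus_nonempty face_plus_nonempty by blast+
  ultimately have "x \<in> A c \<inter> B c"
    using assms(1,2) infdist_eq_imp_mem_both by blast
  then show ?thesis by blast
qed

definition grid_index :: "nat \<Rightarrow> ('n \<Rightarrow> nat) set" where
  "grid_index k = {i. \<forall>s. 1 \<le> i s \<and> i s \<le> k}"

lemma finite_grid_index: "finite (grid_index k :: ('n::finite \<Rightarrow> nat) set)"
proof -
  have "grid_index k \<subseteq> PiE UNIV (\<lambda>_::'n. {1..k})" by (auto simp: grid_index_def)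
  then show ?thesis using finite_PiE[of UNIV "\<lambda>_::'n. {1..k}"] finite_subset by auto
qed

lemma grid_cube_in_grid_cubes: "i \<in> grid_index k \<Longrightarrow> grid_cube k i \<in> grid_cubes k"
  by (auto simp: grid_cubes_def grid_index_def)

lemma ex_grid_cube_containing:
  assumes "k \<ge> 1" "(x::real^'n) \<in> unit_cube"
  shows "\<exists>i\<in>grid_index k. x \<in> grid_cube k i"
proof -
  define i where "i s = nat (max 1 \<lceil>x$s * real k\<rceil>)" for s
  have "i \<in> grid_index k \<and> x \<in> grid_cube k i"
    unfolding grid_index_def grid_cube_def mem_Collect_eq
  proof (intro conjI allI)
    fix s
    have x: "0 \<le> x$s" "x$s \<le> 1" using assms(2) by (auto simp: unit_cube_def)
    have k: "real k \<ge> 1" using assms(1) by simp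
    have "x$s * real k \<le> real k" using x k by (simp add: mult_left_le_one_le)
    then have "\<lceil>x$s * real k\<rceil> \<le> int k" by (simp add: ceiling_le_iff)
    then show "1 \<le> i s" "i s \<le> k" using assms(1) by (auto simp: i_def nat_le_iff)
    have "real (i s) - 1 \<le> x$s * real k"
    proof (cases "\<lceil>x$s * real k\<rceil> \<le> 1")
      case True then show ?thesis using x k by (simp add: i_def)
    next
      case False then show ?thesis by (simp add: i_def)
    qed
    then show "(real (i s) - 1) / real k \<le> x $ s" using k by (simp add: divide_le_eq)
    have "x$s * real k \<le> real (i s)" by (simp add: i_def) linarith
    then show "x $ s \<le> real (i s) / real k" using k by (simp add: le_divide_eq)
  qed
  then show ?thesis by blast
qed

lemma touching_grid_cubes_index_le:
  assumes "k \<ge> 1" "(x::real^'n) \<in> grid_cube k i" "x \<in> grid_cube k j"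
  shows "i s \<le> Suc (j s)"
proof -
  have "(real (i s) - 1) / real k \<le> real (j s) / real k"
    using assms(2,3) order.trans by (fastforce simp: grid_cube_def)
  then have "real (i s) - 1 \<le> real (j s)" using assms(1) by (simp add: divide_le_cancel)
  then show ?thesis by linarith
qed

text \<open>The common facet contains a relatively open subset of a hyperplane.\<close>
lemma aff_dim_grid_cube_facet:
  assumes "k \<ge> 1"
  shows "int CARD('n) - 1 \<le> aff_dim ((grid_cube k i :: (real^'n) set) \<inter> grid_cube k (i(s := Suc (i s))))"
proof -
  have k: "real k > 0" using assms by simp
  define H where "H = {x::real^'n. axis s 1 \<bullet> x = real (i s) / real k}"
  define U where "U = (\<Inter>t\<in>-{s}. {x::real^'n. (real (i t) - 1) / real k < x$t \<and> x$t < real (i t) / real k})"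
  have "open U" unfolding U_def Collect_conj_eq
    by (intro open_INT ballI open_Int open_halfspace_component_gt_cart open_halfspace_component_lt_cart) simp
  then have "openin (top_of_set H) (H \<inter> U)" by (simp add: openin_open_Int)
  moreover have "(\<chi> t. if t = s then real (i s) / real k else (real (i t) - 1/2) / real k) \<in> H \<inter> U"
    using k by (auto simp: H_def U_def inner_axis' divide_strict_right_mono)
  ultimately have "aff_dim (H \<inter> U) = aff_dim H"
    using aff_dim_openin affine_hyperplane unfolding H_def by blast
  also have "aff_dim H = int CARD('n) - 1" unfolding H_def
    by (subst aff_dim_hyperplane) (auto simp: axis_eq_0_iff)
  finally have dim: "aff_dim (H \<inter> U) = int CARD('n) - 1" .
  have bounds: "real (i s) / real k \<le> (real (i s) + 1) / real k" "(real (i s) - 1) / real k \<le> real (i s) / real k"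
    using k by (simp_all add: divide_right_mono)
  moreover have "x \<in> grid_cube k i \<inter> grid_cube k (i(s := Suc (i s)))" if x: "x \<in> H \<inter> U" for x
  proof -
    have xs: "x$s = real (i s) / real k" using x by (simp add: H_def inner_axis')
    have xt: "(real (i t) - 1) / real k < x$t \<and> x$t < real (i t) / real k" if "t \<noteq> s" for t
      using x that by (auto simp: U_def)
    have "(real (i t) - 1) / real k \<le> x$t \<and> x$t \<le> real (i t) / real k" for t
      using xs xt[of t] bounds by (cases "t = s") auto
    moreover have "(real ((i(s := Suc (i s))) t) - 1) / real k \<le> x$t \<and>
        x$t \<le> real ((i(s := Suc (i s))) t) / real k" for t
      using xs xt[of t] bounds by (cases "t = s") (auto simp: add.commute)
    ultimately show ?thesis by (simp add: grid_cube_def)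
  qed
  ultimately show ?thesis using aff_dim_subset dim by (metis subsetI)
qed

definition monochrome_touching ::
    "nat \<Rightarrow> (('n::finite \<Rightarrow> nat) \<Rightarrow> 'n) \<Rightarrow> 'n \<Rightarrow> (('n \<Rightarrow> nat) \<times> ('n \<Rightarrow> nat)) set" where
  "monochrome_touching k col c = {(i, j). i \<in> grid_index k \<and> j \<in> grid_index k \<and> col i = c \<and> col j = c \<and>
      (grid_cube k i :: (real^'n) set) \<inter> grid_cube k j \<noteq> {}}"

definition reachable_from_minus :: "nat \<Rightarrow> (('n::finite \<Rightarrow> nat) \<Rightarrow> 'n) \<Rightarrow> 'n \<Rightarrow> ('n \<Rightarrow> nat) set" where
  "reachable_from_minus k col c = {j. \<exists>i. i \<in> grid_index k \<and> col i = c \<and>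
      (grid_cube k i :: (real^'n) set) \<inter> face_minus c \<noteq> {} \<and> (i, j) \<in> (monochrome_touching k col c)\<^sup>*}"

lemma reachable_from_minus_start:
  assumes "i \<in> grid_index k" "col i = c" "(grid_cube k i :: (real^'n::finite) set) \<inter> face_minus c \<noteq> {}"
  shows "i \<in> reachable_from_minus k col c"
  using assms by (auto simp: reachable_from_minus_def)

lemma reachable_from_minus_coloured:
  assumes "j \<in> reachable_from_minus k col c"
  shows "j \<in> grid_index k \<and> col j = c"
proof -
  obtain i where "(i, j) \<in> (monochrome_touching k col c)\<^sup>*" "i \<in> grid_index k" "col i = c"
    using assms by (auto simp: reachable_from_minus_def)
  then show ?thesis
    by (induction rule: rtrancl_induct) (auto simp: monochrome_touching_def)
qed

lemma reachable_from_minus_touching: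
  assumes "i \<in> reachable_from_minus k col c" "j \<in> grid_index k" "col j = c"
    and "(grid_cube k i :: (real^'n::finite) set) \<inter> grid_cube k j \<noteq> {}"
  shows "j \<in> reachable_from_minus k col c"
proof -
  have "(i, j) \<in> monochrome_touching k col c"
    using assms reachable_from_minus_coloured[OF assms(1)] by (simp add: monochrome_touching_def)
  moreover obtain i0 where "i0 \<in> grid_index k" "col i0 = c"
    "(grid_cube k i0 :: (real^'n) set) \<inter> face_minus c \<noteq> {}" "(i0, i) \<in> (monochrome_touching k col c)\<^sup>*"
    using assms(1) by (auto simp: reachable_from_minus_def)
  ultimately show ?thesis
    unfolding reachable_from_minus_def by (blast intro: rtrancl_into_rtrancl)
qed

lemma reachable_from_minus_separates:
  fixes col :: "('n::finite \<Rightarrow> nat) \<Rightarrow> 'n" and k :: nat and c :: 'n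
  defines "R \<equiv> reachable_from_minus k col c"
  assumes no_crossing: "\<forall>j\<in>R. (grid_cube k j :: (real^'n) set) \<inter> face_plus c = {}"
  shows "(\<Union>(grid_cube k ` R) \<union> face_minus c) \<inter>
      (\<Union>(grid_cube k ` {j \<in> grid_index k. col j = c \<and> j \<notin> R}) \<union> face_plus c) = {}"
proof (intro equals0I)
  fix x :: "real^'n"
  assume "x \<in> (\<Union>(grid_cube k ` R) \<union> face_minus c) \<inter>
      (\<Union>(grid_cube k ` {j \<in> grid_index k. col j = c \<and> j \<notin> R}) \<union> face_plus c)"
  then have minus_side: "x \<in> face_minus c \<or> (\<exists>i\<in>R. x \<in> grid_cube k i)"
    and plus_side: "x \<in> face_plus c \<or> (\<exists>j. j \<in> grid_index k \<and> col j = c \<and> j \<notin> R \<and> x \<in> grid_cube k j)"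
    by auto
  show False
  proof (cases "x \<in> face_plus c")
    case True
    then have "x \<notin> face_minus c" by (simp add: face_minus_def face_plus_def)
    then show False using minus_side True no_crossing by blast
  next
    case False
    then obtain j where j: "j \<in> grid_index k" "col j = c" "j \<notin> R" "x \<in> grid_cube k j"
      using plus_side by blast
    have "j \<in> R"
    proof (cases "x \<in> face_minus c")
      case True then show ?thesis using j reachable_from_minus_start[of j k col c] unfolding R_def by blast
    next
      case False then show ?thesis
        using minus_side j reachable_from_minus_touching[of _ k col c j] unfolding R_def by blast
    qed
    then show False using j(3) by blast
  qed
qed

text \<open>Hex theorem for cubical grids: otherwise, for every colour \<open>c\<close>, the cubes of
  colour \<open>c\<close> reachable from $I^n_{c,-}$ together with $I^n_{c,-}$, and the remaining cubes of
  colour \<open>c\<close> together with $I^n_{c,+}$, would be disjoint closed sets covering the cube.\<close>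
lemma monochrome_crossing_exists:
  fixes col :: "('n::finite \<Rightarrow> nat) \<Rightarrow> 'n"
  assumes k: "k \<ge> 1"
  shows "\<exists>c. \<exists>j\<in>reachable_from_minus k col c. (grid_cube k j :: (real^'n) set) \<inter> face_plus c \<noteq> {}"
proof (rule ccontr)
  assume no_crossing: "\<not> ?thesis"
  define R where "R c = reachable_from_minus k col c" for c
  define A where "A c = \<Union>((grid_cube k :: _ \<Rightarrow> (real^'n) set) ` R c) \<union> face_minus c" for c
  define B where "B c = \<Union>((grid_cube k :: _ \<Rightarrow> (real^'n) set) ` {j \<in> grid_index k. col j = c \<and> j \<notin> R c})
      \<union> face_plus c" for c
  have "R c \<subseteq> grid_index k" for c
    using reachable_from_minus_coloured unfolding R_def by blast
  then have "finite (R c)" for c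
    using finite_grid_index finite_subset by blast
  then have "closed (A c)" for c
    unfolding A_def by (intro closed_Un closed_Union closed_face_minus) (auto simp: closed_grid_cube)
  moreover have "finite {j \<in> grid_index k. col j = c \<and> j \<notin> R c}" for c
    by (simp add: finite_grid_index)
  then have "closed (B c)" for c
    unfolding B_def by (intro closed_Un closed_Union closed_face_plus) (auto simp: closed_grid_cube)
  moreover have "unit_cube \<subseteq> (\<Union>c. A c \<union> B c)"
  proof
    fix x :: "real^'n" assume "x \<in> unit_cube"
    then obtain i where "i \<in> grid_index k" "x \<in> grid_cube k i"
      using ex_grid_cube_containing[OF k] by blast
    then have "x \<in> A (col i) \<union> B (col i)"
      by (cases "i \<in> R (col i)") (auto simp: A_def B_def)
    then show "x \<in> (\<Union>c. A c \<union> B c)" by blast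
  qed
  moreover have "face_minus c \<subseteq> A c" "face_plus c \<subseteq> B c" for c
    by (auto simp: A_def B_def)
  ultimately obtain c where "A c \<inter> B c \<noteq> {}"
    using closed_cover_of_unit_cube_meets[of A B] by blast
  moreover have "A c \<inter> B c = {}"
    using reachable_from_minus_separates[of k col c] no_crossing unfolding A_def B_def R_def by blast
  ultimately show False by blast
qed

lemma linf_dist_le_iff:
  assumes "r \<ge> 0"
  shows "linf_dist d a b \<le> r \<longleftrightarrow> (\<forall>j<d. \<bar>a j - b j\<bar> \<le> r)"
proof -
  have "finite ({\<bar>a j - b j\<bar> | j. j < d} \<union> {0})" by simp
  then show ?thesis unfolding linf_dist_def using assms by (subst Max_le_iff) auto
qed

lemma linf_dist_ge_component: "j < d \<Longrightarrow> \<bar>a j - b j\<bar> \<le> linf_dist d a b"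
  unfolding linf_dist_def by (rule Max_ge) auto

lemma grid_index_walk_bound:
  fixes g :: "('n::finite \<Rightarrow> nat) \<Rightarrow> int"
  assumes step: "\<And>i s. i \<in> grid_index k \<Longrightarrow> i(s := Suc (i s)) \<in> grid_index k \<Longrightarrow>
      \<bar>g i - g (i(s := Suc (i s)))\<bar> \<le> 1"
    and "a \<in> grid_index k" and b: "b \<in> grid_index k" and "\<forall>s. a s \<le> Suc (b s) \<and> b s \<le> Suc (a s)"
  shows "\<bar>g a - g b\<bar> \<le> int (card {s. a s \<noteq> b s})"
  using assms(2,4)
proof (induction "card {s. a s \<noteq> b s}" arbitrary: a)
  case 0
  then have "a = b" by auto
  then show ?case by simp
next
  case (Suc n)
  then have "card {s. a s \<noteq> b s} \<noteq> 0" by linarith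
  then obtain s where s: "a s \<noteq> b s" by (metis (mono_tags) Collect_empty_eq card.empty)
  define a' where "a' = a(s := b s)"
  have diff: "{t. a t \<noteq> b t} = insert s {t. a' t \<noteq> b t}" "s \<notin> {t. a' t \<noteq> b t}"
    using s by (auto simp: a'_def)
  then have "n = card {t. a' t \<noteq> b t}" using Suc.hyps(2) by simp
  moreover have "a' \<in> grid_index k" using Suc.prems(1) b by (auto simp: a'_def grid_index_def)
  moreover have "\<forall>t. a' t \<le> Suc (b t) \<and> b t \<le> Suc (a' t)" using Suc.prems(2) by (simp add: a'_def)
  ultimately have IH: "\<bar>g a' - g b\<bar> \<le> int n" using Suc.hyps(1) by blast
  have "\<bar>g a - g a'\<bar> \<le> 1"
  proof -
    have "a s \<le> Suc (b s)" "b s \<le> Suc (a s)" using Suc.prems(2) by auto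
    then consider "b s = Suc (a s)" | "a s = Suc (b s)" using s by linarith
    then show ?thesis
    proof cases
      case 1
      then have "a' = a(s := Suc (a s))" by (simp add: a'_def)
      then show ?thesis using step[of a s] Suc.prems(1) \<open>a' \<in> grid_index k\<close> by simp
    next
      case 2
      then have "a = a'(s := Suc (a' s))" by (auto simp: a'_def)
      then show ?thesis using step[of a' s] Suc.prems(1) \<open>a' \<in> grid_index k\<close> by (simp add: abs_minus_commute)
    qed
  qed
  then show ?case using IH Suc.hyps(2) by linarith
qed

text \<open>Across a facet the hypothesis on \<open>F\<close> applies, since a facet has dimension
  $n - 1 \<ge> m$.\<close>
lemma touching_cubes_values_close:
  fixes F :: "(real^'n::finite) set \<Rightarrow> nat \<Rightarrow> int" and m :: int
  assumes k: "k \<ge> 1" and m: "m \<le> int CARD('n) - 1"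
    and F: "\<forall>K1\<in>grid_cubes k. \<forall>K2\<in>grid_cubes k. aff_dim (K1 \<inter> K2) \<ge> m \<longrightarrow> linf_dist d (F K1) (F K2) \<le> 1"
    and a: "a \<in> grid_index k" and b: "b \<in> grid_index k"
    and touch: "grid_cube k a \<inter> grid_cube k b \<noteq> {}" and l: "l < d"
  shows "\<bar>F (grid_cube k a) l - F (grid_cube k b) l\<bar> \<le> int CARD('n)"
proof -
  define g where "g i = F (grid_cube k i) l" for i
  have step: "\<bar>g i - g (i(s := Suc (i s)))\<bar> \<le> 1"
    if "i \<in> grid_index k" "i(s := Suc (i s)) \<in> grid_index k" for i s
  proof -
    have "m \<le> aff_dim (grid_cube k i \<inter> grid_cube k (i(s := Suc (i s))))"
      using aff_dim_grid_cube_facet[OF k, of i s] m by linarith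
    then have "linf_dist d (F (grid_cube k i)) (F (grid_cube k (i(s := Suc (i s))))) \<le> 1"
      using F that grid_cube_in_grid_cubes by blast
    then show ?thesis using order.trans[OF linf_dist_ge_component[OF l]] by (simp add: g_def)
  qed
  obtain x where "x \<in> grid_cube k a" "x \<in> grid_cube k b" using touch by blast
  then have "\<forall>s. a s \<le> Suc (b s) \<and> b s \<le> Suc (a s)"
    using touching_grid_cubes_index_le[OF k] by blast
  then have "\<bar>g a - g b\<bar> \<le> int (card {s. a s \<noteq> b s})"
    using grid_index_walk_bound[where g = g and k = k, OF step a b] by blast
  also have "\<dots> \<le> int CARD('n)" by (simp add: card_mono)
  finally show ?thesis by (simp add: g_def)
qed

lemma div_eq_if_mod_margin:
  fixes v w M r :: int
  assumes M: "0 < M" and "0 \<le> r" and margin: "2 * r \<le> (v + r) mod M" and "\<bar>w - v\<bar> \<le> r"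
  shows "w div M = v div M"
proof -
  define q where "q = (v + r) div M"
  have decomp: "v + r = q * M + (v + r) mod M" by (simp add: q_def)
  have "(v + r) mod M < M" using M by simp
  have div_q: "u div M = q" if "q * M \<le> u" "u < q * M + M" for u
  proof -
    have "u div M = (u - q * M + q * M) div M" by simp
    also have "\<dots> = (u - q * M) div M + q" using div_mult_self1[of M "u - q * M" q] M by simp
    also have "(u - q * M) div M = 0" using that by (intro div_pos_pos_trivial) auto
    finally show ?thesis by simp
  qed
  have "w div M = q" using assms decomp \<open>(v + r) mod M < M\<close> by (intro div_q) auto
  moreover have "v div M = q" using assms decomp \<open>(v + r) mod M < M\<close> by (intro div_q) auto
  ultimately show ?thesis by simp
qed

text \<open>The \<open>n\<close>-neighbourhood of \<open>v\<close> lies between two consecutive walls of colour \<open>p\<close>,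
  which sit at $p(2n+1) + n(2n+1)\mathbb{Z}$.\<close>
definition clear_of_walls :: "nat \<Rightarrow> nat \<Rightarrow> int \<Rightarrow> bool" where
  "clear_of_walls n p v \<longleftrightarrow>
     2 * int n \<le> (v + int n - int p * (2 * int n + 1)) mod (int n * (2 * int n + 1))"

lemma clear_of_walls_block_eq:
  assumes "0 < n" "clear_of_walls n p v" "\<bar>w - v\<bar> \<le> int n"
  shows "(w - int p * (2 * int n + 1)) div (int n * (2 * int n + 1))
       = (v - int p * (2 * int n + 1)) div (int n * (2 * int n + 1))"
proof (rule div_eq_if_mod_margin)
  show "0 < int n * (2 * int n + 1)" using assms(1) by simp
qed (use assms in \<open>auto simp: clear_of_walls_def algebra_simps\<close>)

lemma not_clear_of_walls_unique:
  assumes "p < n" "q < n" "\<not> clear_of_walls n p v" "\<not> clear_of_walls n q v"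
  shows "p = q"
proof -
  define L where "L = 2 * int n + 1"
  define M where "M = int n * L"
  have contra: False if pq: "p < q" "q < n" and "\<not> clear_of_walls n p v" "\<not> clear_of_walls n q v" for p q
  proof -
    define r1 where "r1 = (v + int n - int p * L) mod M"
    define r2 where "r2 = (v + int n - int q * L) mod M"
    have "M > 0" using pq by (simp add: M_def L_def)
    then have r: "0 \<le> r1" "r1 < 2 * int n" "0 \<le> r2" "r2 < 2 * int n"
      using that by (auto simp: r1_def r2_def clear_of_walls_def L_def M_def)
    have "M dvd (v + int n - int p * L - r1) - (v + int n - int q * L - r2)"
      unfolding r1_def r2_def by (intro dvd_diff dvd_minus_mod)
    then have dvd: "M dvd (int q - int p) * L - r1 + r2" by (simp add: algebra_simps)
    have "L \<le> (int q - int p) * L" "(int q - int p) * L \<le> (int n - 1) * L"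
      using pq by (simp_all add: L_def mult_right_mono)
    moreover have "(int n - 1) * L = M - L" "2 * int n < L" by (simp_all add: M_def L_def algebra_simps)
    ultimately have "0 < (int q - int p) * L - r1 + r2" "(int q - int p) * L - r1 + r2 < M"
      using r by linarith+
    then show False using zdvd_imp_le[OF dvd] by simp
  qed
  show ?thesis
  proof (rule ccontr)
    assume "p \<noteq> q"
    then consider "p < q" | "q < p" by linarith
    then show False using contra assms by cases blast+
  qed
qed

lemma ex_avoiding_all_if_card_gt:
  assumes "finite C" "d < card C"
    and "\<And>j c c'. j < d \<Longrightarrow> c \<in> C \<Longrightarrow> c' \<in> C \<Longrightarrow> bad j c \<Longrightarrow> bad j c' \<Longrightarrow> c = c'"
  shows "\<exists>c\<in>C. \<forall>j<d. \<not> bad j c"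
proof (rule ccontr)
  assume "\<not> ?thesis"
  then have "C \<subseteq> (\<Union>j<d. {c \<in> C. bad j c})" by blast
  then have "card C \<le> card (\<Union>j<d. {c \<in> C. bad j c})" using assms(1) by (intro card_mono) auto
  also have "\<dots> \<le> (\<Sum>j<d. card {c \<in> C. bad j c})" by (rule card_UN_le) simp
  also have "\<dots> \<le> (\<Sum>j<d. 1)"
  proof (intro sum_mono)
    fix j assume "j \<in> {..<d}"
    then show "card {c \<in> C. bad j c} \<le> 1"
      using assms(1,3) by (subst One_nat_def, subst card_le_Suc0_iff_eq) auto
  qed
  finally show False using assms(2) by simp
qed

definition wall_colour :: "('n::finite \<Rightarrow> nat) \<Rightarrow> (nat \<Rightarrow> int) \<Rightarrow> 'n" where
  "wall_colour h y = (SOME c. \<forall>j < CARD('n) - 1. clear_of_walls CARD('n) (h c) (y j))"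

lemma wall_colour_clear:
  fixes h :: "'n::finite \<Rightarrow> nat"
  assumes "inj h" "\<And>c. h c < CARD('n)" "j < CARD('n) - 1"
  shows "clear_of_walls CARD('n) (h (wall_colour h y)) (y j)"
proof -
  have unique: "c = c'" if "\<not> clear_of_walls CARD('n) (h c) (y i)" "\<not> clear_of_walls CARD('n) (h c') (y i)"
    for i c c'
    using not_clear_of_walls_unique[OF assms(2) assms(2) that] assms(1) by (simp add: inj_eq)
  have "CARD('n) - 1 < card (UNIV :: 'n set)" by (simp add: finite_UNIV_card_ge_0)
  then obtain c where "\<forall>i < CARD('n) - 1. clear_of_walls CARD('n) (h c) (y i)"
    using ex_avoiding_all_if_card_gt[of UNIV "CARD('n) - 1" "\<lambda>i c. \<not> clear_of_walls CARD('n) (h c) (y i)"]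
      unique by auto
  then have "\<forall>i < CARD('n) - 1. clear_of_walls CARD('n) (h (wall_colour h y)) (y i)"
    unfolding wall_colour_def by (rule someI)
  then show ?thesis using assms(3) by blast
qed

lemma r_connectedI:
  assumes "\<And>x y. x \<in> P \<Longrightarrow> y \<in> P \<Longrightarrow>
      \<exists>p N. p 0 = x \<and> p N = y \<and> (\<forall>t\<le>N. p t \<in> P) \<and> (\<forall>t<N. dist_fn (p t) (p (Suc t)) \<le> r)"
  shows "r_connected dist_fn r P"
  unfolding r_connected_def
proof (intro ballI)
  fix x y assume "x \<in> P" "y \<in> P"
  then obtain p N where p: "p 0 = x" "p N = y" "\<forall>t\<le>N. p t \<in> P" "\<forall>t<N. dist_fn (p t) (p (Suc t)) \<le> r"
    using assms by blast
  define ps where "ps = map p [0..<Suc N]"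
  have "hd ps = x" using p(1) by (simp add: ps_def hd_map del: upt_Suc)
  moreover have "last ps = y" using p(2) by (simp add: ps_def last_map del: upt_Suc)
  moreover have "set ps \<subseteq> P" using p(3) by (auto simp: ps_def)
  moreover have "dist_fn (ps ! j) (ps ! Suc j) \<le> r" if "Suc j < length ps" for j
    using p(4) that by (simp add: ps_def nth_map del: upt_Suc)
  ultimately show "\<exists>ps. ps \<noteq> [] \<and> hd ps = x \<and> last ps = y \<and> set ps \<subseteq> P \<and>
      (\<forall>j. Suc j < length ps \<longrightarrow> dist_fn (ps ! j) (ps ! Suc j) \<le> r)"
    by (intro exI[of _ ps]) (simp add: ps_def)
qed

definition int_box :: "nat \<Rightarrow> (nat \<Rightarrow> int) \<Rightarrow> (nat \<Rightarrow> int) \<Rightarrow> (nat \<Rightarrow> int) set" where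
  "int_box d lo hi = {z \<in> Zvec d. \<forall>j<d. lo j \<le> z j \<and> z j \<le> hi j}"

lemma int_box_r_connected: "r_connected (linf_dist d) 1 (int_box d lo hi)"
proof (rule r_connectedI)
  fix x y assume x: "x \<in> int_box d lo hi" and y: "y \<in> int_box d lo hi"
  define p where "p t = (\<lambda>j. if j < d then x j + sgn (y j - x j) * min (int t) \<bar>y j - x j\<bar> else 0)"
    for t :: nat
  define N where "N = nat (linf_dist d x y)"
  have "0 \<le> linf_dist d x y" unfolding linf_dist_def by (rule Max_ge) auto
  then have close: "\<bar>y j - x j\<bar> \<le> int N" if "j < d" for j
    using linf_dist_ge_component[OF that, of x y] by (simp add: N_def abs_minus_commute)
  have "p 0 = x" using x by (auto simp: p_def int_box_def Zvec_def)
  moreover have "p N = y"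
  proof
    fix j show "p N j = y j"
      using close[of j] y by (cases "j < d") (auto simp: p_def sgn_mult_abs min_absorb2 int_box_def Zvec_def)
  qed
  moreover have "p t \<in> int_box d lo hi" for t
  proof -
    have "lo j \<le> p t j \<and> p t j \<le> hi j" if "j < d" for j
      using x y that by (cases "y j - x j" "0::int" rule: linorder_cases) (auto simp: p_def int_box_def)
    then show ?thesis by (simp add: int_box_def Zvec_def p_def)
  qed
  moreover have "linf_dist d (p t) (p (Suc t)) \<le> 1" for t
    by (subst linf_dist_le_iff) (auto simp: p_def abs_mult sgn_if min_def)
  ultimately show "\<exists>p N. p 0 = x \<and> p N = y \<and> (\<forall>t\<le>N. p t \<in> int_box d lo hi) \<and>
      (\<forall>t<N. linf_dist d (p t) (p (Suc t)) \<le> 1)" by blast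
qed

lemma int_box_card_le:
  assumes "\<And>j. j < d \<Longrightarrow> hi j - lo j < int N"
  shows "finite (int_box d lo hi) \<and> card (int_box d lo hi) \<le> N ^ d"
proof -
  define g where "g f = (\<lambda>j. if j < d then lo j + int (f j) else 0)" for f :: "nat \<Rightarrow> nat"
  define A where "A = PiE {..<d} (\<lambda>_. {..<N})"
  have "int_box d lo hi \<subseteq> g ` A"
  proof
    fix z assume z: "z \<in> int_box d lo hi"
    define f where "f j = (if j < d then nat (z j - lo j) else undefined)" for j
    have "f \<in> A" using z assms by (fastforce simp: A_def f_def int_box_def PiE_def extensional_def)
    moreover have "z = g f" using z by (auto simp: g_def f_def int_box_def Zvec_def)
    ultimately show "z \<in> g ` A" by blast
  qed
  moreover have "finite A" "card (g ` A) \<le> N ^ d"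
    using card_image_le[of A g] by (simp_all add: A_def finite_PiE card_PiE)
  ultimately show ?thesis by (meson card_mono finite_imageI finite_subset order.trans)
qed

lemma div_bounds:
  fixes z s M :: int
  assumes "0 < M"
  shows "(z - s) div M * M + s \<le> z \<and> z \<le> (z - s) div M * M + s + M - 1"
proof -
  have "z - s = (z - s) div M * M + (z - s) mod M" by simp
  moreover have "0 \<le> (z - s) mod M" "(z - s) mod M < M" using assms by auto
  ultimately show ?thesis by linarith
qed

lemma connected_Union_rtrancl:
  fixes X :: "'a \<Rightarrow> 'b::topological_space set"
  assumes "\<And>i. connected (X i)" "x0 \<in> X a" "\<And>i j. (i, j) \<in> R \<Longrightarrow> X i \<inter> X j \<noteq> {}"
  shows "connected (\<Union>(X ` {j. (a, j) \<in> R\<^sup>*}))" (is "connected ?U")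
proof -
  have "X j \<subseteq> connected_component_set ?U x0" if "(a, j) \<in> R\<^sup>*" for j
    using that
  proof (induction rule: rtrancl_induct)
    case base then show ?case using assms(1,2) by (intro connected_component_maximal) auto
  next
    case (step j j')
    then obtain y where y: "y \<in> X j" "y \<in> X j'" using assms(3) by blast
    then have "connected_component_set ?U y = connected_component_set ?U x0"
      using step.IH connected_component_eq by blast
    moreover have "X j' \<subseteq> connected_component_set ?U y"
      using y(2) assms(1) step.hyps by (intro connected_component_maximal) (auto intro: rtrancl_into_rtrancl)
    ultimately show ?case by simp
  qed
  then have "?U = connected_component_set ?U x0" using connected_component_subset by blast
  then show ?thesis by (metis connected_connected_component)
qed

lemma monochrome_chain_same_block:
  fixes F :: "(real^'n::finite) set \<Rightarrow> nat \<Rightarrow> int" and m :: int and h :: "'n \<Rightarrow> nat" and k :: nat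
  defines "n \<equiv> CARD('n)" and "col \<equiv> \<lambda>i. wall_colour h (F (grid_cube k i))"
  assumes k: "k \<ge> 1" and m: "m \<le> int n - 1"
    and F: "\<forall>K1\<in>grid_cubes k. \<forall>K2\<in>grid_cubes k. aff_dim (K1 \<inter> K2) \<ge> m \<longrightarrow> linf_dist (n - 1) (F K1) (F K2) \<le> 1"
    and h: "inj h" "\<And>c. h c < n"
    and chain: "(i0, j) \<in> (monochrome_touching k col c)\<^sup>*" and l: "l < n - 1"
  shows "(F (grid_cube k j) l - int (h c) * (2 * int n + 1)) div (int n * (2 * int n + 1))
       = (F (grid_cube k i0) l - int (h c) * (2 * int n + 1)) div (int n * (2 * int n + 1))"
  using chain
proof (induction rule: rtrancl_induct)
  case (step j j')
  then have "j \<in> grid_index k" "j' \<in> grid_index k" "col j = c" and touch: "grid_cube k j' \<inter> grid_cube k j \<noteq> {}"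
    by (auto simp: monochrome_touching_def)
  have "0 < n" by (simp add: n_def finite_UNIV_card_ge_0)
  moreover have "clear_of_walls n (h c) (F (grid_cube k j) l)"
    using wall_colour_clear[OF h[unfolded n_def]] \<open>col j = c\<close> l unfolding col_def n_def by blast
  moreover have "\<bar>F (grid_cube k j') l - F (grid_cube k j) l\<bar> \<le> int n"
    using touching_cubes_values_close[OF k m[unfolded n_def] F[unfolded n_def] _ _ touch l[unfolded n_def]]
      \<open>j \<in> grid_index k\<close> \<open>j' \<in> grid_index k\<close> by (simp add: n_def)
  ultimately have "(F (grid_cube k j') l - int (h c) * (2 * int n + 1)) div (int n * (2 * int n + 1))
      = (F (grid_cube k j) l - int (h c) * (2 * int n + 1)) div (int n * (2 * int n + 1))"
    by (rule clear_of_walls_block_eq)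
  then show ?case using step.IH by (rule trans)
qed simp

lemma connects_opposite_faces_monochrome_chain:
  assumes "(grid_cube k i0 :: (real^'n::finite) set) \<inter> face_minus c \<noteq> {}"
    and "grid_cube k j1 \<inter> face_plus c \<noteq> {}" and "(i0, j1) \<in> (monochrome_touching k col c)\<^sup>*"
  shows "connects_opposite_faces (\<Union>(grid_cube k ` {j. (i0, j) \<in> (monochrome_touching k col c)\<^sup>*}))"
proof -
  obtain x0 where "x0 \<in> grid_cube k i0" using assms(1) by blast
  then have "connected (\<Union>(grid_cube k ` {j. (i0, j) \<in> (monochrome_touching k col c)\<^sup>*}))"
    using connected_grid_cube by (intro connected_Union_rtrancl) (auto simp: monochrome_touching_def)
  then show ?thesis
    using assms unfolding connects_opposite_faces_def by blast
qed

lemma crossing_within_one_block: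
  fixes F :: "(real^'n::finite) set \<Rightarrow> nat \<Rightarrow> int" and m :: int
  defines "d \<equiv> CARD('n) - 1" and "M \<equiv> int CARD('n) * (2 * int CARD('n) + 1)"
  assumes k: "k \<ge> 1" and m: "m \<le> int CARD('n) - 1"
    and F_Zvec: "\<forall>K\<in>grid_cubes k. F K \<in> Zvec d"
    and F: "\<forall>K1\<in>grid_cubes k. \<forall>K2\<in>grid_cubes k. aff_dim (K1 \<inter> K2) \<ge> m \<longrightarrow> linf_dist d (F K1) (F K2) \<le> 1"
  shows "\<exists>P S. P \<subseteq> Zvec d \<and> r_connected (linf_dist d) 1 P \<and> finite P \<and> card P \<le> nat M ^ d \<and>
      S \<subseteq> {K \<in> grid_cubes k. F K \<in> P} \<and> connects_opposite_faces (\<Union>S)"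
proof -
  obtain h :: "'n \<Rightarrow> nat" where "bij_betw h UNIV {0..<CARD('n)}"
    using ex_bij_betw_finite_nat[of "UNIV :: 'n set"] by auto
  then have h: "inj h" "\<And>c. h c < CARD('n)" by (auto simp: bij_betw_def)
  define col where "col i = wall_colour h (F (grid_cube k i))" for i
  obtain c j1 where j1: "j1 \<in> reachable_from_minus k col c" "grid_cube k j1 \<inter> face_plus c \<noteq> {}"
    using monochrome_crossing_exists[OF k, of col] by blast
  then obtain i0 where i0: "i0 \<in> grid_index k" "col i0 = c" "grid_cube k i0 \<inter> face_minus c \<noteq> {}"
    "(i0, j1) \<in> (monochrome_touching k col c)\<^sup>*"
    by (auto simp: reachable_from_minus_def)
  define J where "J = {j. (i0, j) \<in> (monochrome_touching k col c)\<^sup>*}"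
  define shift where "shift = int (h c) * (2 * int CARD('n) + 1)"
  define lo where "lo l = (F (grid_cube k i0) l - shift) div M * M + shift" for l
  define P where "P = int_box d lo (\<lambda>l. lo l + M - 1)"
  have "0 < M" by (simp add: M_def finite_UNIV_card_ge_0)
  have J: "j \<in> grid_index k" if "j \<in> J" for j
    using reachable_from_minus_coloured[of j k col c] that i0 unfolding J_def reachable_from_minus_def by blast
  have "F (grid_cube k j) \<in> P" if "j \<in> J" for j
  proof -
    have "lo l \<le> F (grid_cube k j) l \<and> F (grid_cube k j) l \<le> lo l + M - 1" if "l < d" for l
      using div_bounds[OF \<open>0 < M\<close>, of "F (grid_cube k j) l" shift] \<open>j \<in> J\<close> that
        monochrome_chain_same_block[OF k m F[unfolded d_def] h, of i0 j c l]
      unfolding lo_def J_def shift_def M_def d_def col_def by simp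
    then show ?thesis
      using F_Zvec grid_cube_in_grid_cubes J[OF that] unfolding P_def int_box_def by blast
  qed
  then have "grid_cube k ` J \<subseteq> {K \<in> grid_cubes k. F K \<in> P}"
    using J grid_cube_in_grid_cubes by blast
  moreover have "connects_opposite_faces (\<Union>(grid_cube k ` J))"
    unfolding J_def using i0(3) j1(2) i0(4) by (rule connects_opposite_faces_monochrome_chain)
  moreover have "finite P \<and> card P \<le> nat M ^ d"
    unfolding P_def using \<open>0 < M\<close> by (intro int_box_card_le) simp
  moreover have "P \<subseteq> Zvec d" by (auto simp: P_def int_box_def)
  moreover have "r_connected (linf_dist d) 1 P" by (simp add: P_def int_box_r_connected)
  ultimately show ?thesis by blast
qed

theorem theoremA:
  fixes m :: int
  assumes "0 \<le> m" and "m \<le> int CARD('n) - 1"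
  shows "\<exists>C::real. C > 0 \<and>
    (\<forall>(k::nat) (F :: (real^'n::finite) set \<Rightarrow> (nat \<Rightarrow> int)).
       k \<ge> 1 \<longrightarrow>
       (\<forall>K\<in>grid_cubes k. F K \<in> Zvec (CARD('n) - 1)) \<longrightarrow>
       (\<forall>K1\<in>grid_cubes k. \<forall>K2\<in>grid_cubes k.
          aff_dim (K1 \<inter> K2) \<ge> m \<longrightarrow> linf_dist (CARD('n) - 1) (F K1) (F K2) \<le> 1) \<longrightarrow>
       (\<exists>P S. P \<subseteq> Zvec (CARD('n) - 1) \<and> r_connected (linf_dist (CARD('n) - 1)) 1 P \<and>
          finite P \<and> real (card P) \<le> C \<and>
          S \<subseteq> {K \<in> grid_cubes k. F K \<in> P} \<and>
          connects_opposite_faces (\<Union>S)))"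
proof -
  define d where "d = CARD('n) - 1"
  define M where "M = int CARD('n) * (2 * int CARD('n) + 1)"
  have "0 < M" by (simp add: M_def finite_UNIV_card_ge_0)
  show ?thesis
    unfolding d_def[symmetric]
  proof (intro exI[of _ "real (nat M ^ d)"] conjI allI impI)
    show "0 < real (nat M ^ d)" using \<open>0 < M\<close> by simp
    fix k and F :: "(real^'n) set \<Rightarrow> nat \<Rightarrow> int"
    assume k: "k \<ge> 1" and F_Zvec: "\<forall>K\<in>grid_cubes k. F K \<in> Zvec d"
      and F: "\<forall>K1\<in>grid_cubes k. \<forall>K2\<in>grid_cubes k. aff_dim (K1 \<inter> K2) \<ge> m \<longrightarrow> linf_dist d (F K1) (F K2) \<le> 1"
    have "\<exists>P S. P \<subseteq> Zvec d \<and> r_connected (linf_dist d) 1 P \<and> finite P \<and> card P \<le> nat M ^ d \<and>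
        S \<subseteq> {K \<in> grid_cubes k. F K \<in> P} \<and> connects_opposite_faces (\<Union>S)"
      using crossing_within_one_block[OF k assms(2) F_Zvec[unfolded d_def] F[unfolded d_def]]
      unfolding d_def M_def .
    then show "\<exists>P S. P \<subseteq> Zvec d \<and> r_connected (linf_dist d) 1 P \<and> finite P \<and>
        real (card P) \<le> real (nat M ^ d) \<and> S \<subseteq> {K \<in> grid_cubes k. F K \<in> P} \<and>
        connects_opposite_faces (\<Union>S)"
      by (simp only: of_nat_le_iff)
  qed
qed

end
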